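(* Let $\mathcal{H}=\bigotimes_{i=1}^n\mathbb{C}^{d_i}$, let $|\psi\rangle\in\mathcal{H}$ be a fully entangled pure state, and let $g=g_1\otimes\cdots\otimes g_n$ and $h=h_1\otimes\cdots\otimes h_n$ with $g_i,h_i\in GL(d_i,\mathbb{C})$. Put $G=g^\dagger g$, $H=h^\dagger h$ and $r=\|h|\psi\rangle\|^2/\|g|\psi\rangle\|^2$. Then the state $g|\psi\rangle$ can be transformed into the state $h|\psi\rangle$ via SEP if and only if there exist a finite set of probabilities $p_k\ge 0$ with $\sum_k p_k=1$, symmetries $\{S_k\}_k\subseteq\mathcal{S}_\psi$, and finitely many local matrices $N_q\in\mathcal{N}_{g\psi}$ such that $$\frac{1}{r}\sum_k p_k S_k^\dagger H S_k+g^\dagger\Big(\sum_q N_q^\dagger N_q\Big)g=G.$$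
   Context: A pure state $|\psi\rangle\in\bigotimes_{i=1}^n\mathbb{C}^{d_i}$ is fully entangled if each single-party reduced density matrix $\rho_i$ has rank $d_i$. A CPTP map $\Lambda$ on $\mathcal{B}(\mathcal{H})$ is in SEP if it has a Kraus decomposition $\Lambda(X)=\sum_i K_iXK_i^\dagger$, $\sum_i K_i^\dagger K_i=\mathbb{1}$, with every $K_i=\bigotimes_{j=1}^n K_i^{(j)}$, $K_i^{(j)}\in M(d_j,\mathbb{C})$. A (possibly unnormalized) state $|\alpha\rangle$ can be transformed into $|\beta\rangle$ via a class of maps if some map $\Lambda$ in the class satisfies $\Lambda(|\alpha\rangle\langle\alpha|/\langle\alpha|\alpha\rangle)=|\beta\rangle\langle\beta|/\langle\beta|\beta\rangle$. The stabilizer $\mathcal{S}_\psi$ is the set of operators $S=S^{(1)}\otimes\cdots\otimes S^{(n)}$ with $S^{(i)}\in GL(d_i,\mathbb{C})$ and $S|\psi\rangle=|\psi\rangle$. For a vector $|\chi\rangle$, $\mathcal{N}_{\chi}$ is the set of operators $N=N^{(1)}\otimes\cdots\otimes N^{(n)}$ with $N^{(i)}\in M(d_i,\mathbb{C})$ and $N|\chi\rangle=0$; here $\mathcal{N}_{g\psi}$ refers to $|\chi\rangle=g|\psi\rangle$. *)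

theory Defs
  imports Complex_Main "Jordan_Normal_Form.DL_Rank"
begin

text \<open>The Hilbert space (C^d_0) tensor ... tensor (C^d_(n-1)) is modelled by complex functions on
  the finite set of multi-indices idxs n d; global operators are functions idx => idx => complex
  (matrices indexed by idxs n d).  Local operators are families K j (j < n) of JNF matrices.\<close>

type_synonym idx = "nat \<Rightarrow> nat"
type_synonym gvec = "idx \<Rightarrow> complex"
type_synonym gop = "idx \<Rightarrow> idx \<Rightarrow> complex"
type_synonym local_op = "nat \<Rightarrow> complex mat"

definition idxs :: "nat \<Rightarrow> (nat \<Rightarrow> nat) \<Rightarrow> idx set" where
  "idxs n d = (\<Pi>\<^sub>E j\<in>{..<n}. {..<d j})"

definition tensor_op :: "nat \<Rightarrow> local_op \<Rightarrow> gop" where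
  "tensor_op n K = (\<lambda>x y. \<Prod>j<n. K j $$ (x j, y j))"

definition op_apply :: "nat \<Rightarrow> (nat \<Rightarrow> nat) \<Rightarrow> gop \<Rightarrow> gvec \<Rightarrow> gvec" where
  "op_apply n d A v = (\<lambda>x. \<Sum>y\<in>idxs n d. A x y * v y)"

definition op_mult :: "nat \<Rightarrow> (nat \<Rightarrow> nat) \<Rightarrow> gop \<Rightarrow> gop \<Rightarrow> gop" where
  "op_mult n d A B = (\<lambda>x y. \<Sum>z\<in>idxs n d. A x z * B z y)"

definition op_adj :: "gop \<Rightarrow> gop" where
  "op_adj A = (\<lambda>x y. cnj (A y x))"

definition op_id :: gop where
  "op_id = (\<lambda>x y. if x = y then 1 else 0)"

definition op_eq :: "nat \<Rightarrow> (nat \<Rightarrow> nat) \<Rightarrow> gop \<Rightarrow> gop \<Rightarrow> bool" where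
  "op_eq n d A B \<longleftrightarrow> (\<forall>x\<in>idxs n d. \<forall>y\<in>idxs n d. A x y = B x y)"

definition vnorm2 :: "nat \<Rightarrow> (nat \<Rightarrow> nat) \<Rightarrow> gvec \<Rightarrow> real" where
  "vnorm2 n d v = (\<Sum>x\<in>idxs n d. (cmod (v x))\<^sup>2)"

definition proj :: "nat \<Rightarrow> (nat \<Rightarrow> nat) \<Rightarrow> gvec \<Rightarrow> gop" where
  "proj n d v = (\<lambda>x y. v x * cnj (v y) / complex_of_real (vnorm2 n d v))"

definition reduced_dm :: "nat \<Rightarrow> (nat \<Rightarrow> nat) \<Rightarrow> gvec \<Rightarrow> nat \<Rightarrow> complex mat" where
  "reduced_dm n d v i = mat (d i) (d i) (\<lambda>(a, b).
     \<Sum>x\<in>idxs n d. \<Sum>y\<in>idxs n d.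
       if x i = a \<and> y i = b \<and> (\<forall>j. j \<noteq> i \<longrightarrow> x j = y j)
       then v x * cnj (v y) / complex_of_real (vnorm2 n d v) else 0)"

definition fully_entangled :: "nat \<Rightarrow> (nat \<Rightarrow> nat) \<Rightarrow> gvec \<Rightarrow> bool" where
  "fully_entangled n d v \<longleftrightarrow>
     (\<forall>i<n. vec_space.rank (d i) (reduced_dm n d v i :: complex mat) = d i)"

definition local_ops :: "nat \<Rightarrow> (nat \<Rightarrow> nat) \<Rightarrow> local_op \<Rightarrow> bool" where
  "local_ops n d K \<longleftrightarrow> (\<forall>j<n. K j \<in> carrier_mat (d j) (d j))"

definition local_invertible :: "nat \<Rightarrow> (nat \<Rightarrow> nat) \<Rightarrow> local_op \<Rightarrow> bool" where
  "local_invertible n d K \<longleftrightarrow> local_ops n d K \<and> (\<forall>j<n. invertible_mat (K j))"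

definition sep_kraus :: "nat \<Rightarrow> (nat \<Rightarrow> nat) \<Rightarrow> local_op list \<Rightarrow> bool" where
  "sep_kraus n d Ks \<longleftrightarrow> (\<forall>K\<in>set Ks. local_ops n d K) \<and>
     op_eq n d (\<lambda>x y. \<Sum>K\<leftarrow>Ks. op_mult n d (op_adj (tensor_op n K)) (tensor_op n K) x y) op_id"

definition apply_channel :: "nat \<Rightarrow> (nat \<Rightarrow> nat) \<Rightarrow> local_op list \<Rightarrow> gop \<Rightarrow> gop" where
  "apply_channel n d Ks \<rho> = (\<lambda>x y. \<Sum>K\<leftarrow>Ks.
     op_mult n d (op_mult n d (tensor_op n K) \<rho>) (op_adj (tensor_op n K)) x y)"

definition sep_transformable :: "nat \<Rightarrow> (nat \<Rightarrow> nat) \<Rightarrow> gvec \<Rightarrow> gvec \<Rightarrow> bool" where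
  "sep_transformable n d \<alpha> \<beta> \<longleftrightarrow>
     (\<exists>Ks. sep_kraus n d Ks \<and> op_eq n d (apply_channel n d Ks (proj n d \<alpha>)) (proj n d \<beta>))"

definition in_stabilizer :: "nat \<Rightarrow> (nat \<Rightarrow> nat) \<Rightarrow> gvec \<Rightarrow> local_op \<Rightarrow> bool" where
  "in_stabilizer n d \<psi> S \<longleftrightarrow> local_invertible n d S \<and>
     (\<forall>x\<in>idxs n d. op_apply n d (tensor_op n S) \<psi> x = \<psi> x)"

definition in_annihilator :: "nat \<Rightarrow> (nat \<Rightarrow> nat) \<Rightarrow> gvec \<Rightarrow> local_op \<Rightarrow> bool" where
  "in_annihilator n d \<chi> N \<longleftrightarrow> local_ops n d N \<and>
     (\<forall>x\<in>idxs n d. op_apply n d (tensor_op n N) \<chi> x = 0)"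

definition gram :: "nat \<Rightarrow> (nat \<Rightarrow> nat) \<Rightarrow> local_op \<Rightarrow> gop" where
  "gram n d K = op_mult n d (op_adj (tensor_op n K)) (tensor_op n K)"

end

theory Submission
  imports Defs
begin

(* If a separable channel with product Kraus operators K_k maps g psi to the pure state h psi,
   every K_k g psi is a multiple c_k h psi, and comparing norms gives sum_k |c_k|^2 = 1/r.
   When c_k is nonzero, S_k = h^-1 K_k g / c_k is a product operator fixing psi; it is invertible
   because a singular local factor of an operator fixing psi would produce a linear relation
   among the slices of psi along that party, i.e. a kernel vector of the reduced density
   matrix of a fully entangled state. When c_k = 0, K_k annihilates g psi. Conjugating the
   completeness relation sum_k K_k^dagger K_k = 1 by g yields the identity with p_k = r |c_k|^2.
   Conversely, conjugating the identity by g^-1 shows that the operators sqrt (p_k / r) h S_k g^-1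
   together with the N_q form a separable channel, and it maps g psi to h psi. *)

section \<open>Operators on the tensor product space\<close>

lemma finite_idxs [simp]: "finite (idxs n d)"
  unfolding idxs_def by (simp add: finite_PiE)

lemma idxs_less: "x \<in> idxs n d \<Longrightarrow> j < n \<Longrightarrow> x j < d j"
  unfolding idxs_def by (auto simp: PiE_iff)

lemma fun_upd_in_idxs: "x \<in> idxs n d \<Longrightarrow> i < n \<Longrightarrow> a < d i \<Longrightarrow> x(i := a) \<in> idxs n d"
  unfolding idxs_def by (auto simp: PiE_iff extensional_def)

lemma idxs_eqI: "x \<in> idxs n d \<Longrightarrow> y \<in> idxs n d \<Longrightarrow> (\<And>j. j < n \<Longrightarrow> x j = y j) \<Longrightarrow> x = y"
  unfolding idxs_def by (metis PiE_ext lessThan_iff)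

lemma idxs_0: "idxs 0 d = {\<lambda>_. undefined}"
  unfolding idxs_def by simp

abbreviation sandwich :: "nat \<Rightarrow> (nat \<Rightarrow> nat) \<Rightarrow> gop \<Rightarrow> gop \<Rightarrow> gop" where
  "sandwich n d A X \<equiv> op_mult n d (op_mult n d (op_adj A) X) A"

lemma op_mult_assoc: "op_mult n d (op_mult n d A B) C = op_mult n d A (op_mult n d B C)"
  unfolding op_mult_def
  by (intro ext) (simp only: sum_distrib_left sum_distrib_right mult.assoc, rule sum.swap)

lemma op_apply_op_mult: "op_apply n d (op_mult n d A B) v = op_apply n d A (op_apply n d B v)"
  unfolding op_mult_def op_apply_def
  by (intro ext) (simp only: sum_distrib_left sum_distrib_right mult.assoc, rule sum.swap)

lemma op_adj_op_mult: "op_adj (op_mult n d A B) = op_mult n d (op_adj B) (op_adj A)"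
  unfolding op_mult_def op_adj_def by (auto simp: mult.commute)

lemma op_adj_op_id: "op_adj op_id = op_id"
  by (intro ext) (simp add: op_adj_def op_id_def)

lemma op_adj_scale: "op_adj (\<lambda>x y. a * A x y) = (\<lambda>x y. cnj a * op_adj A x y)"
  by (simp add: op_adj_def)

lemma op_mult_cong:
  assumes "\<And>x z. x \<in> idxs n d \<Longrightarrow> z \<in> idxs n d \<Longrightarrow> A x z = A' x z"
    and "\<And>z y. z \<in> idxs n d \<Longrightarrow> y \<in> idxs n d \<Longrightarrow> B z y = B' z y"
    and "x \<in> idxs n d" "y \<in> idxs n d"
  shows "op_mult n d A B x y = op_mult n d A' B' x y"
  unfolding op_mult_def using assms by (intro sum.cong) auto

lemma op_apply_cong:
  assumes "\<And>z. z \<in> idxs n d \<Longrightarrow> A x z = A' x z" and "\<And>z. z \<in> idxs n d \<Longrightarrow> v z = v' z"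
  shows "op_apply n d A v x = op_apply n d A' v' x"
  unfolding op_apply_def using assms by (intro sum.cong) auto

lemma sandwich_cong:
  assumes "\<And>x y. x \<in> idxs n d \<Longrightarrow> y \<in> idxs n d \<Longrightarrow> X x y = X' x y"
    and "x \<in> idxs n d" "y \<in> idxs n d"
  shows "sandwich n d A X x y = sandwich n d A X' x y"
  using assms by (intro op_mult_cong) (auto intro: op_mult_cong)

lemma op_mult_op_id_left: "x \<in> idxs n d \<Longrightarrow> op_mult n d op_id A x y = A x y"
  unfolding op_mult_def op_id_def
  by (subst sum.cong[OF refl, of _ _ "\<lambda>z. if x = z then A z y else 0"]) auto

lemma op_mult_op_id_right: "y \<in> idxs n d \<Longrightarrow> op_mult n d A op_id x y = A x y"
  unfolding op_mult_def op_id_def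
  by (subst sum.cong[OF refl, of _ _ "\<lambda>z. if z = y then A x z else 0"]) auto

lemma op_apply_op_id: "x \<in> idxs n d \<Longrightarrow> op_apply n d op_id v x = v x"
  unfolding op_apply_def op_id_def
  by (subst sum.cong[OF refl, of _ _ "\<lambda>z. if x = z then v z else 0"]) auto

lemma op_mult_add_left:
  "op_mult n d (\<lambda>x y. A x y + A' x y) B = (\<lambda>x y. op_mult n d A B x y + op_mult n d A' B x y)"
  by (simp add: op_mult_def distrib_right sum.distrib)

lemma op_mult_add_right:
  "op_mult n d A (\<lambda>x y. B x y + B' x y) = (\<lambda>x y. op_mult n d A B x y + op_mult n d A B' x y)"
  by (simp add: op_mult_def distrib_left sum.distrib)

lemma op_mult_scale_left: "op_mult n d (\<lambda>x y. a * A x y) B = (\<lambda>x y. a * op_mult n d A B x y)"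
  by (simp add: op_mult_def sum_distrib_left mult.assoc)

lemma op_mult_scale_right: "op_mult n d A (\<lambda>x y. a * B x y) = (\<lambda>x y. a * op_mult n d A B x y)"
  by (simp add: op_mult_def sum_distrib_left mult.assoc mult.left_commute)

lemma op_mult_sum_list_left:
  "op_mult n d (\<lambda>x y. \<Sum>k\<leftarrow>ks. A k x y) B = (\<lambda>x y. \<Sum>k\<leftarrow>ks. op_mult n d (A k) B x y)"
  by (intro ext, induction ks) (auto simp: op_mult_def sum_distrib_right distrib_right sum.distrib)

lemma op_mult_sum_list_right:
  "op_mult n d A (\<lambda>x y. \<Sum>k\<leftarrow>ks. B k x y) = (\<lambda>x y. \<Sum>k\<leftarrow>ks. op_mult n d A (B k) x y)"
  by (intro ext, induction ks) (auto simp: op_mult_def sum_distrib_left distrib_left sum.distrib)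

lemma op_apply_scale: "op_apply n d A (\<lambda>x. c * v x) = (\<lambda>x. c * op_apply n d A v x)"
  by (simp add: op_apply_def sum_distrib_left mult.left_commute)

lemma op_apply_scale_op: "op_apply n d (\<lambda>x y. c * A x y) v = (\<lambda>x. c * op_apply n d A v x)"
  by (simp add: op_apply_def sum_distrib_left mult.assoc)

lemma vnorm2_nonneg: "0 \<le> vnorm2 n d u"
  unfolding vnorm2_def by (simp add: sum_nonneg)

lemma vnorm2_eq_0_iff: "vnorm2 n d u = 0 \<longleftrightarrow> (\<forall>x\<in>idxs n d. u x = 0)"
  unfolding vnorm2_def by (subst sum_nonneg_eq_0_iff) auto

lemma vnorm2_pos_iff: "0 < vnorm2 n d u \<longleftrightarrow> (\<exists>x\<in>idxs n d. u x \<noteq> 0)"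
  using vnorm2_nonneg[of n d u] vnorm2_eq_0_iff[of n d u] by auto

section \<open>Product operators\<close>

(* The scalar is absorbed into the first tensor factor, so this scales the product operator
   only when n > 0. *)
definition local_smult :: "complex \<Rightarrow> local_op \<Rightarrow> local_op" where
  "local_smult c K = (\<lambda>j. if j = 0 then c \<cdot>\<^sub>m K j else K j)"

lemma local_ops_mult: "local_ops n d A \<Longrightarrow> local_ops n d B \<Longrightarrow> local_ops n d (\<lambda>j. A j * B j)"
  unfolding local_ops_def by auto

lemma local_ops_local_smult: "local_ops n d K \<Longrightarrow> local_ops n d (local_smult c K)"
  unfolding local_ops_def local_smult_def by auto

lemma mult_local_smult:
  assumes "local_ops n d A" "local_ops n d B" "j < n"
  shows "A j * local_smult c B j = local_smult c (\<lambda>j. A j * B j) j"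
  using assms by (auto simp: local_smult_def local_ops_def intro: mult_smult_distrib)

lemma tensor_op_cong: "(\<And>j. j < n \<Longrightarrow> A j = B j) \<Longrightarrow> tensor_op n A = tensor_op n B"
  unfolding tensor_op_def by (intro ext prod.cong) auto

lemma tensor_op_mult:
  assumes A: "local_ops n d A" and B: "local_ops n d B" and x: "x \<in> idxs n d" and y: "y \<in> idxs n d"
  shows "op_mult n d (tensor_op n A) (tensor_op n B) x y = tensor_op n (\<lambda>j. A j * B j) x y"
proof -
  have "(A j * B j) $$ (x j, y j) = (\<Sum>c<d j. A j $$ (x j, c) * B j $$ (c, y j))" if j: "j < n" for j
  proof -
    have "A j \<in> carrier_mat (d j) (d j)" "B j \<in> carrier_mat (d j) (d j)" "x j < d j" "y j < d j"
      using A B x y j by (auto simp: local_ops_def idxs_less)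
    then show ?thesis by (simp add: scalar_prod_def atLeast0LessThan)
  qed
  then have "tensor_op n (\<lambda>j. A j * B j) x y = (\<Prod>j<n. \<Sum>c<d j. A j $$ (x j, c) * B j $$ (c, y j))"
    unfolding tensor_op_def by simp
  also have "\<dots> = (\<Sum>z\<in>idxs n d. \<Prod>j<n. A j $$ (x j, z j) * B j $$ (z j, y j))"
    unfolding idxs_def by (rule prod_sum_PiE) auto
  also have "\<dots> = op_mult n d (tensor_op n A) (tensor_op n B) x y"
    unfolding op_mult_def tensor_op_def by (simp add: prod.distrib)
  finally show ?thesis by simp
qed

lemma tensor_op_one:
  assumes x: "x \<in> idxs n d" and y: "y \<in> idxs n d"
  shows "tensor_op n (\<lambda>j. 1\<^sub>m (d j)) x y = op_id x y"
proof (cases "x = y")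
  case True
  then show ?thesis using x by (simp add: tensor_op_def op_id_def idxs_less)
next
  case False
  then obtain j where "j < n" "x j \<noteq> y j" using idxs_eqI[OF x y] by blast
  then show ?thesis using x y False
    by (auto simp: tensor_op_def op_id_def idxs_less intro!: prod_zero)
qed

lemma tensor_op_local_smult:
  assumes "0 < n" "local_ops n d K" "x \<in> idxs n d" "y \<in> idxs n d"
  shows "tensor_op n (local_smult c K) x y = c * tensor_op n K x y"
proof -
  have "{..<n} = insert 0 {1..<n}" using assms by auto
  moreover have "(c \<cdot>\<^sub>m K 0) $$ (x 0, y 0) = c * K 0 $$ (x 0, y 0)"
    using assms by (auto simp: local_ops_def idxs_less)
  ultimately show ?thesis unfolding tensor_op_def local_smult_def by simp
qed

lemma op_apply_tensor_op_mult:
  assumes "local_ops n d A" "local_ops n d B" "x \<in> idxs n d"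
  shows "op_apply n d (tensor_op n (\<lambda>j. A j * B j)) v x
    = op_apply n d (tensor_op n A) (op_apply n d (tensor_op n B) v) x"
proof -
  have "op_apply n d (tensor_op n (\<lambda>j. A j * B j)) v x
      = op_apply n d (op_mult n d (tensor_op n A) (tensor_op n B)) v x"
    using tensor_op_mult[OF assms(1,2) assms(3)] by (intro op_apply_cong) auto
  then show ?thesis by (simp add: op_apply_op_mult)
qed

lemma op_apply_tensor_op_local_smult:
  assumes "0 < n" "local_ops n d K" "x \<in> idxs n d"
  shows "op_apply n d (tensor_op n (local_smult c K)) v x = c * op_apply n d (tensor_op n K) v x"
proof -
  have "op_apply n d (tensor_op n (local_smult c K)) v x
      = op_apply n d (\<lambda>z w. c * tensor_op n K z w) v x"
    using tensor_op_local_smult[OF assms(1,2) assms(3)] by (intro op_apply_cong) auto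
  then show ?thesis by (simp add: op_apply_scale_op)
qed

lemma tensor_op_inverse:
  assumes "local_ops n d A" "local_ops n d B" "\<forall>j<n. A j * B j = 1\<^sub>m (d j)"
    and "x \<in> idxs n d" "y \<in> idxs n d"
  shows "op_mult n d (tensor_op n A) (tensor_op n B) x y = op_id x y"
proof -
  have "op_mult n d (tensor_op n A) (tensor_op n B) x y = tensor_op n (\<lambda>j. A j * B j) x y"
    by (rule tensor_op_mult[OF assms(1,2,4,5)])
  also have "tensor_op n (\<lambda>j. A j * B j) = tensor_op n (\<lambda>j. 1\<^sub>m (d j))"
    using assms(3) by (intro tensor_op_cong) auto
  finally show ?thesis using tensor_op_one assms(4,5) by simp
qed

lemma op_apply_tensor_op_inverse:
  assumes "local_ops n d A" "local_ops n d B" "\<forall>j<n. A j * B j = 1\<^sub>m (d j)" "x \<in> idxs n d"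
  shows "op_apply n d (tensor_op n A) (op_apply n d (tensor_op n B) v) x = v x"
proof -
  have "op_apply n d (tensor_op n A) (op_apply n d (tensor_op n B) v) x
      = op_apply n d (op_mult n d (tensor_op n A) (tensor_op n B)) v x"
    by (simp add: op_apply_op_mult)
  also have "\<dots> = op_apply n d op_id v x"
    using tensor_op_inverse[OF assms(1,2,3) assms(4)] by (intro op_apply_cong) auto
  finally show ?thesis using op_apply_op_id assms(4) by simp
qed

lemma tensor_op_cancel_local_smult:
  assumes h: "local_ops n d h" and hinv: "local_ops n d hinv" and X: "local_ops n d X"
    and h_hinv: "\<forall>j<n. h j * hinv j = 1\<^sub>m (d j)"
  shows "tensor_op n (\<lambda>j. h j * local_smult c (\<lambda>j. hinv j * X j) j) = tensor_op n (local_smult c X)"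
proof (rule tensor_op_cong)
  fix j assume j: "j < n"
  have hj: "h j \<in> carrier_mat (d j) (d j)" and hinvj: "hinv j \<in> carrier_mat (d j) (d j)"
    and Xj: "X j \<in> carrier_mat (d j) (d j)"
    using h hinv X j unfolding local_ops_def by auto
  have "h j * (hinv j * X j) = (h j * hinv j) * X j"
    by (rule assoc_mult_mat[OF hj hinvj Xj, symmetric])
  also have "\<dots> = X j" using h_hinv j left_mult_one_mat[OF Xj] by simp
  finally show "h j * local_smult c (\<lambda>j. hinv j * X j) j = local_smult c X j"
    using mult_local_smult[OF h local_ops_mult[OF hinv X] j]
    by (cases "j = 0") (simp_all add: local_smult_def)
qed

lemma gram_local_smult:
  assumes "0 < n" "local_ops n d K" "x \<in> idxs n d" "y \<in> idxs n d"
  shows "gram n d (local_smult c K) x y = complex_of_real ((cmod c)\<^sup>2) * gram n d K x y"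
proof -
  have "gram n d (local_smult c K) x y
      = op_mult n d (op_adj (\<lambda>z w. c * tensor_op n K z w)) (\<lambda>z w. c * tensor_op n K z w) x y"
    unfolding gram_def using tensor_op_local_smult[OF assms(1,2)] assms(3,4)
    by (intro op_mult_cong) (auto simp: op_adj_def)
  also have "\<dots> = cnj c * c * gram n d K x y"
    by (simp only: gram_def op_adj_scale op_mult_scale_left op_mult_scale_right mult.assoc)
  finally show ?thesis by (simp only: complex_norm_square mult.commute[of "cnj c" c])
qed

lemma gram_tensor_op_mult:
  assumes "local_ops n d A" "local_ops n d B" "x \<in> idxs n d" "y \<in> idxs n d"
  shows "gram n d (\<lambda>j. A j * B j) x y = sandwich n d (tensor_op n B) (gram n d A) x y"
proof -
  have "gram n d (\<lambda>j. A j * B j) x y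
      = op_mult n d (op_adj (op_mult n d (tensor_op n A) (tensor_op n B)))
          (op_mult n d (tensor_op n A) (tensor_op n B)) x y"
    unfolding gram_def using tensor_op_mult[OF assms(1,2)] assms(3,4)
    by (intro op_mult_cong) (auto simp: op_adj_def)
  then show ?thesis by (simp only: gram_def op_adj_op_mult op_mult_assoc)
qed

lemma sandwich_tensor_op_inverse:
  assumes "local_ops n d A" "local_ops n d B" "\<forall>j<n. A j * B j = 1\<^sub>m (d j)"
    and "x \<in> idxs n d" "y \<in> idxs n d"
  shows "sandwich n d (tensor_op n B) (sandwich n d (tensor_op n A) X) x y = X x y"
proof -
  have AB: "op_mult n d (tensor_op n A) (tensor_op n B) z w = op_id z w"
    if "z \<in> idxs n d" "w \<in> idxs n d" for z w
    using tensor_op_inverse[OF assms(1-3) that] .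
  have "sandwich n d (tensor_op n B) (sandwich n d (tensor_op n A) X) x y
      = op_mult n d (op_adj (op_mult n d (tensor_op n A) (tensor_op n B)))
          (op_mult n d X (op_mult n d (tensor_op n A) (tensor_op n B))) x y"
    by (simp only: op_adj_op_mult op_mult_assoc)
  also have "\<dots> = op_mult n d (op_adj op_id) (op_mult n d X op_id) x y"
    using AB assms(4,5) by (intro op_mult_cong) (auto simp: op_adj_def intro!: op_mult_cong)
  also have "\<dots> = X x y"
    using assms(4,5) by (simp add: op_adj_op_id op_mult_op_id_left op_mult_op_id_right)
  finally show ?thesis .
qed

lemma sandwich_kraus_sum:
  assumes "sep_kraus n d Ks" "x \<in> idxs n d" "y \<in> idxs n d"
  shows "(\<Sum>K\<leftarrow>Ks. sandwich n d A (gram n d K) x y) = op_mult n d (op_adj A) A x y"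
proof -
  have "(\<Sum>K\<leftarrow>Ks. sandwich n d A (gram n d K) x y)
      = sandwich n d A (\<lambda>x' y'. \<Sum>K\<leftarrow>Ks. gram n d K x' y') x y"
    by (simp only: op_mult_sum_list_left op_mult_sum_list_right)
  also have "\<dots> = sandwich n d A op_id x y"
    using assms unfolding sep_kraus_def op_eq_def gram_def by (intro sandwich_cong) auto
  also have "\<dots> = op_mult n d (op_adj A) A x y"
    using assms(2,3) by (intro op_mult_cong) (auto simp: op_mult_op_id_right)
  finally show ?thesis .
qed

lemma sandwich_inverse_gram:
  assumes "local_ops n d A" "local_ops n d B" "\<forall>j<n. A j * B j = 1\<^sub>m (d j)"
    and "x \<in> idxs n d" "y \<in> idxs n d"
  shows "sandwich n d (tensor_op n B) (gram n d A) x y = op_id x y"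
proof -
  have "gram n d A z w = sandwich n d (tensor_op n A) op_id z w"
    if "z \<in> idxs n d" "w \<in> idxs n d" for z w
    unfolding gram_def using that by (intro op_mult_cong) (auto simp: op_mult_op_id_right)
  then have "sandwich n d (tensor_op n B) (gram n d A) x y
      = sandwich n d (tensor_op n B) (sandwich n d (tensor_op n A) op_id) x y"
    using assms(4,5) by (rule sandwich_cong)
  also have "\<dots> = op_id x y" by (rule sandwich_tensor_op_inverse[OF assms])
  finally show ?thesis .
qed

lemma sandwich_inverse_decomposition:
  assumes A: "local_ops n d A" and B: "local_ops n d B" and AB: "\<forall>j<n. A j * B j = 1\<^sub>m (d j)"
    and eq: "op_eq n d (\<lambda>x y. X x y + sandwich n d (tensor_op n A) Y x y) (gram n d A)"
    and x: "x \<in> idxs n d" and y: "y \<in> idxs n d"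
  shows "sandwich n d (tensor_op n B) X x y + Y x y = op_id x y"
proof -
  have "sandwich n d (tensor_op n B) X x y + Y x y
      = sandwich n d (tensor_op n B) X x y
        + sandwich n d (tensor_op n B) (sandwich n d (tensor_op n A) Y) x y"
    unfolding sandwich_tensor_op_inverse[OF A B AB x y] ..
  also have "\<dots> = sandwich n d (tensor_op n B)
      (\<lambda>x y. X x y + sandwich n d (tensor_op n A) Y x y) x y"
    by (simp only: op_mult_add_left op_mult_add_right)
  also have "\<dots> = sandwich n d (tensor_op n B) (gram n d A) x y"
    using eq x y unfolding op_eq_def by (intro sandwich_cong) auto
  also have "\<dots> = op_id x y" by (rule sandwich_inverse_gram[OF A B AB x y])
  finally show ?thesis .
qed

lemma invertible_mat_if_det_nonzero:
  assumes A: "(A :: 'a :: field mat) \<in> carrier_mat m m" and "det A \<noteq> 0"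
  shows "invertible_mat A"
proof -
  have "A \<in> Units (ring_mat TYPE('a) m undefined)"
    using det_non_zero_imp_unit[OF A] assms(2) .
  then obtain B where "B \<in> carrier_mat m m" "B * A = 1\<^sub>m m" "A * B = 1\<^sub>m m"
    unfolding Units_def ring_mat_def by auto
  then show ?thesis using A unfolding invertible_mat_def inverts_mat_def by auto
qed

lemma invertible_matE:
  assumes "invertible_mat A" "A \<in> carrier_mat m m"
  obtains B where "B \<in> carrier_mat m m" "A * B = 1\<^sub>m m" "B * A = 1\<^sub>m m"
proof -
  obtain B where AB: "A * B = 1\<^sub>m m" and BA: "B * A = 1\<^sub>m (dim_row B)"
    using assms unfolding invertible_mat_def inverts_mat_def by auto
  have "dim_col B = m" using arg_cong[OF AB, of dim_col] by simp
  moreover have "dim_row B = m" using arg_cong[OF BA, of dim_col] assms(2) by simp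
  ultimately show ?thesis using that AB BA by auto
qed

lemma local_invertibleE:
  assumes "local_invertible n d g"
  obtains ginv where "local_ops n d ginv"
    and "\<forall>j<n. g j * ginv j = 1\<^sub>m (d j)" and "\<forall>j<n. ginv j * g j = 1\<^sub>m (d j)"
proof -
  have "\<exists>B. B \<in> carrier_mat (d j) (d j) \<and> g j * B = 1\<^sub>m (d j) \<and> B * g j = 1\<^sub>m (d j)"
    if "j < n" for j
  proof -
    have "invertible_mat (g j)" "g j \<in> carrier_mat (d j) (d j)"
      using assms that unfolding local_invertible_def local_ops_def by auto
    then obtain B where "B \<in> carrier_mat (d j) (d j)" "g j * B = 1\<^sub>m (d j)" "B * g j = 1\<^sub>m (d j)"
      by (rule invertible_matE)
    then show ?thesis by blast
  qed
  then obtain ginv where "\<forall>j<n. ginv j \<in> carrier_mat (d j) (d j) \<and>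
      g j * ginv j = 1\<^sub>m (d j) \<and> ginv j * g j = 1\<^sub>m (d j)"
    by metis
  then show ?thesis using that unfolding local_ops_def by blast
qed

lemma vnorm2_op_apply_pos:
  assumes "local_invertible n d A" and "0 < vnorm2 n d \<psi>"
  shows "0 < vnorm2 n d (op_apply n d (tensor_op n A) \<psi>)"
proof -
  obtain B where B: "local_ops n d B" and BA: "\<forall>j<n. B j * A j = 1\<^sub>m (d j)"
    using assms(1) by (rule local_invertibleE)
  have A: "local_ops n d A" using assms(1) by (simp add: local_invertible_def)
  obtain x where x: "x \<in> idxs n d" "\<psi> x \<noteq> 0" using assms(2) vnorm2_pos_iff by blast
  have "op_apply n d (tensor_op n B) (op_apply n d (tensor_op n A) \<psi>) x \<noteq> 0"
    using op_apply_tensor_op_inverse[OF B A BA x(1)] x(2) by simp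
  then show ?thesis unfolding vnorm2_pos_iff by (auto simp: op_apply_def intro: sum.neutral)
qed

section \<open>Fully entangled states\<close>

lemma fully_entangled_vnorm2_pos:
  assumes "fully_entangled n d \<psi>" "0 < n" "0 < d 0"
  shows "0 < vnorm2 n d \<psi>"
proof (rule ccontr)
  assume "\<not> ?thesis"
  then have "\<forall>x\<in>idxs n d. \<psi> x = 0" using vnorm2_pos_iff by blast
  then have "reduced_dm n d \<psi> 0 = 0\<^sub>m (d 0) (d 0)"
    unfolding reduced_dm_def by (intro eq_matI) (auto intro!: sum.neutral)
  then have "vec_space.rank (d 0) (reduced_dm n d \<psi> 0) = 0" by (simp add: vec_space.rank_0I)
  then show False using assms unfolding fully_entangled_def by auto
qed

lemma reduced_dm_entry:
  assumes i: "i < n" and a: "a < d i" and b: "b < d i"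
  shows "reduced_dm n d v i $$ (a, b) = (\<Sum>x\<in>idxs n d.
    if x i = a then v x * cnj (v (x(i := b))) / complex_of_real (vnorm2 n d v) else 0)"
  unfolding reduced_dm_def using a b
proof (simp, intro sum.cong refl)
  fix x assume x: "x \<in> idxs n d"
  let ?F = "\<lambda>y. v x * cnj (v y) / complex_of_real (vnorm2 n d v)"
  have "(\<Sum>y\<in>idxs n d. if x i = a \<and> y i = b \<and> (\<forall>j. j \<noteq> i \<longrightarrow> x j = y j) then ?F y else 0)
      = (\<Sum>y\<in>idxs n d. if x i = a then (if y = x(i := b) then ?F y else 0) else 0)"
    by (intro sum.cong) auto
  also have "\<dots> = (if x i = a then ?F (x(i := b)) else 0)"
    using fun_upd_in_idxs[OF x i b] by auto
  finally show "(\<Sum>y\<in>idxs n d. if x i = a \<and> y i = b \<and> (\<forall>j. j \<noteq> i \<longrightarrow> x j = y j) then ?F y else 0)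
      = (if x i = a then ?F (x(i := b)) else 0)" .
qed

text \<open>The conjugate of \<open>u\<close> lies in the kernel of the reduced density matrix \<open>\<rho>\<^sub>i\<close>, which has
  full rank.\<close>

lemma fully_entangled_slice_relation:
  assumes ent: "fully_entangled n d \<psi>" and i: "i < n" and u: "u \<in> carrier_vec (d i)"
    and rel: "\<forall>x\<in>idxs n d. (\<Sum>a<d i. u $ a * \<psi> (x(i := a))) = 0"
  shows "u = 0\<^sub>v (d i)"
proof (rule ccontr)
  assume u0: "u \<noteq> 0\<^sub>v (d i)"
  let ?\<rho> = "reduced_dm n d \<psi> i"
  define w where "w = vec (d i) (\<lambda>b. cnj (u $ b))"
  have \<rho>: "?\<rho> \<in> carrier_mat (d i) (d i)" by (simp add: reduced_dm_def)
  have "?\<rho> *\<^sub>v w = 0\<^sub>v (d i)"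
  proof (rule eq_vecI)
    fix a assume "a < dim_vec (0\<^sub>v (d i))"
    then have a: "a < d i" by simp
    have "(?\<rho> *\<^sub>v w) $ a = (\<Sum>b<d i. ?\<rho> $$ (a, b) * cnj (u $ b))"
      using a \<rho> by (auto simp: scalar_prod_def w_def atLeast0LessThan)
    also have "\<dots> = (\<Sum>b<d i. \<Sum>x\<in>idxs n d. if x i = a
        then \<psi> x / complex_of_real (vnorm2 n d \<psi>) * cnj (u $ b * \<psi> (x(i := b))) else 0)"
      using reduced_dm_entry[where n = n and d = d and i = i, OF i a]
      by (intro sum.cong refl) (auto simp: sum_distrib_right intro!: sum.cong)
    also have "\<dots> = (\<Sum>x\<in>idxs n d. if x i = a then \<psi> x / complex_of_real (vnorm2 n d \<psi>)
        * cnj (\<Sum>b<d i. u $ b * \<psi> (x(i := b))) else 0)"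
      by (subst sum.swap) (auto simp: sum_distrib_left intro!: sum.cong)
    also have "\<dots> = 0" using rel by (intro sum.neutral) simp
    finally show "(?\<rho> *\<^sub>v w) $ a = 0\<^sub>v (d i) $ a" using a by simp
  qed (use \<rho> in simp)
  moreover have "w \<noteq> 0\<^sub>v (d i)"
  proof
    assume "w = 0\<^sub>v (d i)"
    then have "u $ b = 0" if "b < d i" for b
      using that unfolding w_def by (metis index_vec index_zero_vec(1) complex_cnj_zero_iff)
    then have "u = 0\<^sub>v (d i)" using u by (intro eq_vecI) auto
    with u0 show False by simp
  qed
  moreover have "w \<in> carrier_vec (d i)" by (simp add: w_def)
  ultimately have "det ?\<rho> = 0" using det_0_iff_vec_prod_zero[OF \<rho>] by blast
  then show False using vec_space.det_rank_iff[OF \<rho>] ent i unfolding fully_entangled_def by auto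
qed

lemma fixed_tensor_op_slice_relation:
  assumes S: "local_ops n d S" and i: "i < n"
    and fixed: "\<forall>x\<in>idxs n d. op_apply n d (tensor_op n S) \<psi> x = \<psi> x"
    and left_null: "\<forall>b<d i. (\<Sum>a<d i. u $ a * S i $$ (a, b)) = 0"
    and x: "x \<in> idxs n d"
  shows "(\<Sum>a<d i. u $ a * \<psi> (x(i := a))) = 0"
proof -
  let ?R = "\<lambda>y. \<Prod>j\<in>{..<n} - {i}. S j $$ (x j, y j)"
  have "\<psi> (x(i := a)) = (\<Sum>y\<in>idxs n d. S i $$ (a, y i) * (?R y * \<psi> y))" if a: "a < d i" for a
  proof -
    have "(\<Prod>j<n. S j $$ ((x(i := a)) j, y j)) = S i $$ (a, y i) * ?R y" for y
      using i by (subst prod.remove[of _ i]) (auto intro!: prod.cong)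
    then show ?thesis
      using fixed fun_upd_in_idxs[OF x i a]
      by (auto simp: op_apply_def tensor_op_def mult.assoc)
  qed
  then have "(\<Sum>a<d i. u $ a * \<psi> (x(i := a)))
      = (\<Sum>y\<in>idxs n d. (\<Sum>a<d i. u $ a * S i $$ (a, y i)) * (?R y * \<psi> y))"
    by (simp add: sum_distrib_left sum_distrib_right mult.assoc sum.swap[of _ "{..<d i}"])
  also have "\<dots> = 0" using left_null by (intro sum.neutral) (simp add: idxs_less i)
  finally show ?thesis .
qed

lemma fixed_tensor_op_invertible:
  assumes ent: "fully_entangled n d \<psi>" and S: "local_ops n d S" and i: "i < n"
    and fixed: "\<forall>x\<in>idxs n d. op_apply n d (tensor_op n S) \<psi> x = \<psi> x"
  shows "invertible_mat (S i)"
proof (rule ccontr)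
  assume "\<not> invertible_mat (S i)"
  have Si: "S i \<in> carrier_mat (d i) (d i)" using S i by (auto simp: local_ops_def)
  have "det (S i) = 0" using invertible_mat_if_det_nonzero[OF Si] \<open>\<not> invertible_mat (S i)\<close> by auto
  then have "det (transpose_mat (S i)) = 0" using det_transpose[OF Si] by simp
  then obtain u where u: "u \<in> carrier_vec (d i)" "u \<noteq> 0\<^sub>v (d i)"
      and "transpose_mat (S i) *\<^sub>v u = 0\<^sub>v (d i)"
    using det_0_iff_vec_prod_zero[of "transpose_mat (S i)" "d i"] Si by auto
  have "(\<Sum>a<d i. u $ a * S i $$ (a, b)) = 0" if b: "b < d i" for b
  proof -
    have "(transpose_mat (S i) *\<^sub>v u) $ b = 0"
      using \<open>transpose_mat (S i) *\<^sub>v u = 0\<^sub>v (d i)\<close> b by simp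
    then show ?thesis using Si u(1) b
      by (auto simp: mult_mat_vec_def scalar_prod_def atLeast0LessThan mult.commute)
  qed
  then have "\<forall>x\<in>idxs n d. (\<Sum>a<d i. u $ a * \<psi> (x(i := a))) = 0"
    using fixed_tensor_op_slice_relation[OF S i fixed] by blast
  then show False using fully_entangled_slice_relation[OF ent i u(1)] u(2) by blast
qed

section \<open>Rank-one decompositions\<close>

definition vinner :: "nat \<Rightarrow> (nat \<Rightarrow> nat) \<Rightarrow> gvec \<Rightarrow> gvec \<Rightarrow> complex" where
  "vinner n d u v = (\<Sum>x\<in>idxs n d. cnj (u x) * v x)"

lemma vinner_self: "vinner n d u u = complex_of_real (vnorm2 n d u)"
  unfolding vinner_def vnorm2_def of_real_sum
  by (intro sum.cong refl) (subst complex_norm_square, simp add: mult.commute)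

lemma cnj_vinner: "cnj (vinner n d u v) = vinner n d v u"
  unfolding vinner_def by (simp add: mult.commute)

lemma vinner_diff_right: "vinner n d u (\<lambda>x. v x - c * w x) = vinner n d u v - c * vinner n d u w"
  unfolding vinner_def by (simp add: algebra_simps sum_subtractf sum_distrib_left)

lemma vinner_rank_one_sum:
  assumes "\<forall>x\<in>idxs n d. \<forall>y\<in>idxs n d.
      (\<Sum>k\<leftarrow>ks. f k x * cnj (f k y) / a) = b x * cnj (b y) / c"
  shows "(\<Sum>k\<leftarrow>ks. vinner n d w (f k) * cnj (vinner n d w (f k)) / a)
    = vinner n d w b * cnj (vinner n d w b) / c"
proof -
  let ?Q = "\<lambda>M. \<Sum>x\<in>idxs n d. \<Sum>y\<in>idxs n d. cnj (w x) * w y * M x y"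
  have quad: "?Q (\<lambda>x y. u x * cnj (u y) / e) = vinner n d w u * cnj (vinner n d w u) / e" for u e
    unfolding vinner_def cnj_sum sum_product sum_divide_distrib complex_cnj_mult complex_cnj_cnj
    by (intro sum.cong refl) (simp add: algebra_simps)
  have "?Q (\<lambda>x y. \<Sum>k\<leftarrow>ks. f k x * cnj (f k y) / a)
      = (\<Sum>k\<leftarrow>ks. ?Q (\<lambda>x y. f k x * cnj (f k y) / a))"
    by (induction ks) (simp_all add: distrib_left sum.distrib)
  moreover have "?Q (\<lambda>x y. \<Sum>k\<leftarrow>ks. f k x * cnj (f k y) / a) = ?Q (\<lambda>x y. b x * cnj (b y) / c)"
    using assms by (intro sum.cong refl) auto
  ultimately show ?thesis by (simp only: quad)
qed

text \<open>The component \<open>w\<close> of \<open>f\<^sub>k\<close> orthogonal to \<open>b\<close> satisfies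
  \<open>\<Sum>\<^sub>l |\<langle>w, f\<^sub>l\<rangle>|\<^sup>2 = |\<langle>w, b\<rangle>|\<^sup>2 = 0\<close>, so it is orthogonal to every \<open>f\<^sub>l\<close>, hence to itself.\<close>

lemma rank_one_sum_proportional:
  assumes E: "\<forall>x\<in>idxs n d. \<forall>y\<in>idxs n d.
      (\<Sum>k\<leftarrow>ks. f k x * cnj (f k y) / complex_of_real a) = b x * cnj (b y) / complex_of_real c"
    and a: "0 < a" and b: "0 < vnorm2 n d b" and k: "k \<in> set ks" and x: "x \<in> idxs n d"
  shows "f k x = vinner n d b (f k) / vinner n d b b * b x"
proof -
  define \<mu> where "\<mu> = vinner n d b (f k) / vinner n d b b"
  define w where "w = (\<lambda>x. f k x - \<mu> * b x)"
  have "vinner n d b b \<noteq> 0" using b by (simp add: vinner_self)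
  then have "vinner n d b w = 0" unfolding w_def vinner_diff_right \<mu>_def by simp
  then have wb: "vinner n d w b = 0" using cnj_vinner[of n d b w] by simp
  have "complex_of_real (\<Sum>l\<leftarrow>ks. (cmod (vinner n d w (f l)))\<^sup>2 / a)
      = (\<Sum>l\<leftarrow>ks. vinner n d w (f l) * cnj (vinner n d w (f l)) / complex_of_real a)"
    by (simp add: sum_list_of_real[symmetric] o_def complex_norm_square del: of_real_power)
  also have "\<dots> = 0" using vinner_rank_one_sum[OF E, of w] wb by simp
  finally have "(\<Sum>l\<leftarrow>ks. (cmod (vinner n d w (f l)))\<^sup>2 / a) = 0" by simp
  then have "(cmod (vinner n d w (f k)))\<^sup>2 / a = 0"
    using a k by (subst (asm) sum_list_nonneg_eq_0_iff) auto
  then have "vinner n d w (f k) = 0" using a by simp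
  moreover have "vinner n d w w = vinner n d w (f k) - \<mu> * vinner n d w b"
    unfolding w_def by (rule vinner_diff_right)
  ultimately have "vnorm2 n d w = 0" using wb by (simp add: vinner_self)
  then have "w x = 0" using x by (simp add: vnorm2_eq_0_iff)
  then show ?thesis unfolding w_def \<mu>_def by simp
qed

lemma rank_one_sum_decomposition:
  assumes E: "\<forall>x\<in>idxs n d. \<forall>y\<in>idxs n d.
      (\<Sum>k\<leftarrow>ks. f k x * cnj (f k y) / complex_of_real a)
        = b x * cnj (b y) / complex_of_real (vnorm2 n d b)"
    and a: "0 < a" and b: "0 < vnorm2 n d b"
  obtains c where "\<forall>k\<in>set ks. \<forall>x\<in>idxs n d. f k x = c k * b x"
    and "(\<Sum>k\<leftarrow>ks. (cmod (c k))\<^sup>2) = a / vnorm2 n d b"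
proof
  define c where "c k = vinner n d b (f k) / vinner n d b b" for k
  show multiple: "\<forall>k\<in>set ks. \<forall>x\<in>idxs n d. f k x = c k * b x"
    unfolding c_def using rank_one_sum_proportional[OF E a b] by blast
  obtain x where x: "x \<in> idxs n d" "b x \<noteq> 0" using b vnorm2_pos_iff by blast
  have "(\<Sum>k\<leftarrow>ks. c k * cnj (c k) / complex_of_real a) * (b x * cnj (b x))
      = (\<Sum>k\<leftarrow>ks. c k * cnj (c k) / complex_of_real a * (b x * cnj (b x)))"
    by (rule sum_list_mult_const[symmetric])
  also have "\<dots> = (\<Sum>k\<leftarrow>ks. f k x * cnj (f k x) / complex_of_real a)"
    using multiple x(1) by (intro arg_cong[where f = sum_list] map_cong) simp_all
  also have "\<dots> = b x * cnj (b x) / complex_of_real (vnorm2 n d b)"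
    using E x(1) by blast
  finally have eq: "(\<Sum>k\<leftarrow>ks. c k * cnj (c k) / complex_of_real a) * (b x * cnj (b x))
      = b x * cnj (b x) / complex_of_real (vnorm2 n d b)" .
  have nz: "b x * cnj (b x) \<noteq> 0" using x(2) by simp
  have "(\<Sum>k\<leftarrow>ks. c k * cnj (c k) / complex_of_real a)
      = (\<Sum>k\<leftarrow>ks. c k * cnj (c k) / complex_of_real a) * (b x * cnj (b x)) / (b x * cnj (b x))"
    using nz by simp
  also have "\<dots> = 1 / complex_of_real (vnorm2 n d b)" unfolding eq using nz by simp
  finally have "(\<Sum>k\<leftarrow>ks. c k * cnj (c k) / complex_of_real a) = 1 / complex_of_real (vnorm2 n d b)" .
  moreover have "(\<Sum>k\<leftarrow>ks. c k * cnj (c k) / complex_of_real a)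
      = (\<Sum>k\<leftarrow>ks. c k * cnj (c k)) / complex_of_real a"
    by (induction ks) (simp_all add: add_divide_distrib)
  moreover have "(\<Sum>k\<leftarrow>ks. c k * cnj (c k)) = complex_of_real (\<Sum>k\<leftarrow>ks. (cmod (c k))\<^sup>2)"
    by (simp add: sum_list_of_real[symmetric] o_def complex_norm_square del: of_real_power)
  ultimately have "complex_of_real (vnorm2 n d b * (\<Sum>k\<leftarrow>ks. (cmod (c k))\<^sup>2)) = complex_of_real a"
    using a b by (simp add: field_simps)
  then show "(\<Sum>k\<leftarrow>ks. (cmod (c k))\<^sup>2) = a / vnorm2 n d b"
    using b by (simp only: of_real_eq_iff) (simp add: field_simps)
qed

section \<open>Separable channels acting on pure states\<close>

lemma apply_channel_proj:
  "apply_channel n d Ks (proj n d u) x y = (\<Sum>K\<leftarrow>Ks.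
     op_apply n d (tensor_op n K) u x * cnj (op_apply n d (tensor_op n K) u y)
       / complex_of_real (vnorm2 n d u))"
proof -
  have "op_mult n d (op_mult n d A (\<lambda>x y. u x * cnj (u y) / c)) (op_adj A) x y
     = op_apply n d A u x * cnj (op_apply n d A u y) / c" for A c
  proof -
    have "op_mult n d (op_mult n d A (\<lambda>x y. u x * cnj (u y) / c)) (op_adj A) x y
       = (\<Sum>w\<in>idxs n d. \<Sum>z\<in>idxs n d. A x w * u w * (cnj (u z) * cnj (A y z)) / c)"
      unfolding op_mult_def op_adj_def by (subst sum.swap) (simp add: sum_distrib_right mult.assoc)
    then show ?thesis
      unfolding op_apply_def by (simp add: sum_product sum_divide_distrib mult.commute)
  qed
  then show ?thesis unfolding apply_channel_def proj_def by simp
qed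

lemma kraus_images_proportional:
  assumes out: "op_eq n d (apply_channel n d Ks (proj n d \<alpha>)) (proj n d \<beta>)"
    and \<alpha>: "0 < vnorm2 n d \<alpha>" and \<beta>: "0 < vnorm2 n d \<beta>"
  obtains c where "\<forall>K\<in>set Ks. \<forall>x\<in>idxs n d. op_apply n d (tensor_op n K) \<alpha> x = c K * \<beta> x"
    and "(\<Sum>K\<leftarrow>Ks. (cmod (c K))\<^sup>2) = vnorm2 n d \<alpha> / vnorm2 n d \<beta>"
proof -
  have "\<forall>x\<in>idxs n d. \<forall>y\<in>idxs n d.
      (\<Sum>K\<leftarrow>Ks. op_apply n d (tensor_op n K) \<alpha> x * cnj (op_apply n d (tensor_op n K) \<alpha> y)
        / complex_of_real (vnorm2 n d \<alpha>)) = \<beta> x * cnj (\<beta> y) / complex_of_real (vnorm2 n d \<beta>)"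
    using out unfolding op_eq_def apply_channel_proj by (simp add: proj_def)
  from rank_one_sum_decomposition[where f = "\<lambda>K. op_apply n d (tensor_op n K) \<alpha>", OF this \<alpha> \<beta>]
  show ?thesis using that by blast
qed

lemma sep_transformable_if_kraus_images:
  assumes Ks: "sep_kraus n d (map snd cKs)"
    and img: "\<forall>(c, K)\<in>set cKs. \<forall>x\<in>idxs n d. op_apply n d (tensor_op n K) \<alpha> x = c * \<beta> x"
    and norm: "(\<Sum>(c, K)\<leftarrow>cKs. (cmod c)\<^sup>2) = vnorm2 n d \<alpha> / vnorm2 n d \<beta>"
    and \<alpha>: "0 < vnorm2 n d \<alpha>" and \<beta>: "0 < vnorm2 n d \<beta>"
  shows "sep_transformable n d \<alpha> \<beta>"
  unfolding sep_transformable_def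
proof (intro exI conjI)
  show "op_eq n d (apply_channel n d (map snd cKs) (proj n d \<alpha>)) (proj n d \<beta>)"
    unfolding op_eq_def
  proof (intro ballI)
    fix x y assume x: "x \<in> idxs n d" and y: "y \<in> idxs n d"
    let ?N = "\<lambda>u. complex_of_real (vnorm2 n d u)"
    have "apply_channel n d (map snd cKs) (proj n d \<alpha>) x y
        = (\<Sum>(c, K)\<leftarrow>cKs. c * cnj c * (\<beta> x * cnj (\<beta> y) / ?N \<alpha>))"
      unfolding apply_channel_proj map_map
      using img x y by (intro arg_cong[where f = sum_list] map_cong) auto
    also have "\<dots> = complex_of_real (\<Sum>(c, K)\<leftarrow>cKs. (cmod c)\<^sup>2) * (\<beta> x * cnj (\<beta> y) / ?N \<alpha>)"
      by (induction cKs) (auto simp: complex_norm_square[symmetric] distrib_right add_divide_distrib)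
    also have "\<dots> = proj n d \<beta> x y"
      using \<alpha> \<beta> unfolding norm proj_def by (simp add: field_simps)
    finally show "apply_channel n d (map snd cKs) (proj n d \<alpha>) x y = proj n d \<beta> x y" .
  qed
qed (fact Ks)

lemma sep_transformable_refl: "sep_transformable n d \<alpha> \<alpha>"
  unfolding sep_transformable_def
proof (intro exI conjI)
  let ?one = "\<lambda>j. 1\<^sub>m (d j)"
  have one: "tensor_op n ?one x y = op_id x y" if "x \<in> idxs n d" "y \<in> idxs n d" for x y
    using that by (rule tensor_op_one)
  have "op_mult n d (op_adj (tensor_op n ?one)) (tensor_op n ?one) x y = op_id x y"
    if x: "x \<in> idxs n d" and y: "y \<in> idxs n d" for x y
  proof -
    have "op_mult n d (op_adj (tensor_op n ?one)) (tensor_op n ?one) x y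
        = op_mult n d (op_adj op_id) op_id x y"
      using one x y by (intro op_mult_cong) (auto simp: op_adj_def)
    then show ?thesis using x by (simp add: op_adj_op_id op_mult_op_id_left)
  qed
  then show "sep_kraus n d [?one]"
    unfolding sep_kraus_def op_eq_def by (simp add: local_ops_def)
  have "op_mult n d (op_mult n d (tensor_op n ?one) \<rho>) (op_adj (tensor_op n ?one)) x y = \<rho> x y"
    if x: "x \<in> idxs n d" and y: "y \<in> idxs n d" for x y \<rho>
  proof -
    have "op_mult n d (op_mult n d (tensor_op n ?one) \<rho>) (op_adj (tensor_op n ?one)) x y
        = op_mult n d (op_mult n d op_id \<rho>) (op_adj op_id) x y"
      using one x y by (intro op_mult_cong) (auto simp: op_adj_def)
    then show ?thesis using x y by (simp add: op_adj_op_id op_mult_op_id_left op_mult_op_id_right)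
  qed
  then show "op_eq n d (apply_channel n d [?one] (proj n d \<alpha>)) (proj n d \<alpha>)"
    unfolding op_eq_def apply_channel_def by simp
qed

definition stabilizer_decomposition ::
    "nat \<Rightarrow> (nat \<Rightarrow> nat) \<Rightarrow> gvec \<Rightarrow> local_op \<Rightarrow> local_op \<Rightarrow> real \<Rightarrow> bool" where
  "stabilizer_decomposition n d \<psi> g h r \<longleftrightarrow>
    (\<exists>(pS :: (real \<times> local_op) list) (Ns :: local_op list).
       (\<forall>(p, S)\<in>set pS. 0 \<le> p \<and> in_stabilizer n d \<psi> S) \<and>
       (\<Sum>(p, S)\<leftarrow>pS. p) = 1 \<and>
       (\<forall>N\<in>set Ns. in_annihilator n d (op_apply n d (tensor_op n g) \<psi>) N) \<and>
       op_eq n d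
         (\<lambda>x y. complex_of_real (1 / r) *
             (\<Sum>(p, S)\<leftarrow>pS. complex_of_real p * sandwich n d (tensor_op n S) (gram n d h) x y)
           + sandwich n d (tensor_op n g) (\<lambda>x' y'. \<Sum>N\<leftarrow>Ns. gram n d N x' y') x y)
         (gram n d g))"

lemma sum_list_filter_split:
  "(\<Sum>k\<leftarrow>filter P ks. f k) + (\<Sum>k\<leftarrow>filter (\<lambda>k. \<not> P k) ks. f k) = (\<Sum>k\<leftarrow>ks. f k)"
  for f :: "'a \<Rightarrow> 'b::comm_monoid_add"
  by (induction ks) (auto simp: add_ac)

lemma in_stabilizer_kraus_operator:
  assumes n: "0 < n" and ent: "fully_entangled n d \<psi>"
    and g: "local_ops n d g" and h: "local_ops n d h" and hinv: "local_ops n d hinv"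
    and hinv_h: "\<forall>j<n. hinv j * h j = 1\<^sub>m (d j)"
    and K: "local_ops n d K" and c: "c \<noteq> 0"
    and img: "\<forall>x\<in>idxs n d.
      op_apply n d (tensor_op n K) (op_apply n d (tensor_op n g) \<psi>) x = c * op_apply n d (tensor_op n h) \<psi> x"
  shows "in_stabilizer n d \<psi> (local_smult (1 / c) (\<lambda>j. hinv j * (K j * g j)))"
proof -
  let ?T = "tensor_op n" and ?M = "\<lambda>j. hinv j * (K j * g j)"
  have Kg: "local_ops n d (\<lambda>j. K j * g j)" using K g by (rule local_ops_mult)
  have M: "local_ops n d ?M" using hinv Kg by (rule local_ops_mult)
  have S: "local_ops n d (local_smult (1 / c) ?M)" using M by (rule local_ops_local_smult)
  have "\<forall>x\<in>idxs n d. op_apply n d (?T (local_smult (1 / c) ?M)) \<psi> x = \<psi> x"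
  proof
    fix x assume x: "x \<in> idxs n d"
    have "op_apply n d (?T ?M) \<psi> x = op_apply n d (?T hinv) (\<lambda>z. c * op_apply n d (?T h) \<psi> z) x"
      using img op_apply_tensor_op_mult[OF K g] x
      by (subst op_apply_tensor_op_mult[OF hinv Kg x]) (auto intro: op_apply_cong)
    also have "\<dots> = c * \<psi> x"
      using op_apply_tensor_op_inverse[OF hinv h hinv_h x] by (simp add: op_apply_scale)
    finally show "op_apply n d (?T (local_smult (1 / c) ?M)) \<psi> x = \<psi> x"
      using op_apply_tensor_op_local_smult[OF n M x] c by simp
  qed
  then show ?thesis
    using S fixed_tensor_op_invertible[OF ent S]
    unfolding in_stabilizer_def local_invertible_def by blast
qed

lemma sandwich_gram_kraus_operator:
  assumes n: "0 < n" and g: "local_ops n d g" and h: "local_ops n d h" and hinv: "local_ops n d hinv"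
    and h_hinv: "\<forall>j<n. h j * hinv j = 1\<^sub>m (d j)" and K: "local_ops n d K" and c: "c \<noteq> 0"
    and x: "x \<in> idxs n d" and y: "y \<in> idxs n d"
  defines "S \<equiv> local_smult (1 / c) (\<lambda>j. hinv j * (K j * g j))"
  shows "complex_of_real ((cmod c)\<^sup>2) * sandwich n d (tensor_op n S) (gram n d h) x y
    = sandwich n d (tensor_op n g) (gram n d K) x y"
proof -
  have Kg: "local_ops n d (\<lambda>j. K j * g j)" using K g by (rule local_ops_mult)
  have S: "local_ops n d S"
    unfolding S_def using local_ops_mult[OF hinv Kg] by (rule local_ops_local_smult)
  have hS: "gram n d (\<lambda>j. h j * S j) = gram n d (local_smult (1 / c) (\<lambda>j. K j * g j))"
    unfolding gram_def S_def tensor_op_cancel_local_smult[OF h hinv Kg h_hinv] ..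
  have "complex_of_real ((cmod c)\<^sup>2) * sandwich n d (tensor_op n S) (gram n d h) x y
      = complex_of_real ((cmod c)\<^sup>2) * complex_of_real ((cmod (1 / c))\<^sup>2) * gram n d (\<lambda>j. K j * g j) x y"
    unfolding gram_tensor_op_mult[OF h S x y, symmetric] hS gram_local_smult[OF n Kg x y]
    by (simp only: mult.assoc)
  also have "\<dots> = gram n d (\<lambda>j. K j * g j) x y"
    using c by (simp add: norm_divide power_divide flip: of_real_mult)
  finally show ?thesis unfolding gram_tensor_op_mult[OF K g x y] .
qed

lemma sandwich_kraus_sum_regrouped:
  assumes Ks: "sep_kraus n d Ks" and r: "0 < r"
    and rel: "\<And>K. K \<in> set Ks \<Longrightarrow> c K \<noteq> 0 \<Longrightarrow>
      complex_of_real ((cmod (c K))\<^sup>2) * sandwich n d (tensor_op n (S K)) H x y = sandwich n d A (gram n d K) x y"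
    and x: "x \<in> idxs n d" and y: "y \<in> idxs n d"
  shows "complex_of_real (1 / r) *
      (\<Sum>(p, S)\<leftarrow>map (\<lambda>K. (r * (cmod (c K))\<^sup>2, S K)) (filter (\<lambda>K. c K \<noteq> 0) Ks).
        complex_of_real p * sandwich n d (tensor_op n S) H x y)
    + sandwich n d A (\<lambda>x' y'. \<Sum>N\<leftarrow>filter (\<lambda>K. c K = 0) Ks. gram n d N x' y') x y
    = op_mult n d (op_adj A) A x y"
proof -
  let ?F = "\<lambda>K. sandwich n d A (gram n d K) x y"
  have "complex_of_real (1 / r) *
      (\<Sum>(p, S)\<leftarrow>map (\<lambda>K. (r * (cmod (c K))\<^sup>2, S K)) (filter (\<lambda>K. c K \<noteq> 0) Ks).
        complex_of_real p * sandwich n d (tensor_op n S) H x y)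
      = (\<Sum>K\<leftarrow>filter (\<lambda>K. c K \<noteq> 0) Ks. complex_of_real (1 / r) *
          (complex_of_real (r * (cmod (c K))\<^sup>2) * sandwich n d (tensor_op n (S K)) H x y))"
    by (simp only: map_map o_def prod.case sum_list_const_mult[symmetric])
  also have "\<dots> = (\<Sum>K\<leftarrow>filter (\<lambda>K. c K \<noteq> 0) Ks. ?F K)"
  proof (intro arg_cong[where f = sum_list] map_cong refl)
    fix K assume "K \<in> set (filter (\<lambda>K. c K \<noteq> 0) Ks)"
    moreover have "complex_of_real (1 / r) * complex_of_real (r * (cmod (c K))\<^sup>2)
        = complex_of_real ((cmod (c K))\<^sup>2)"
      unfolding of_real_mult[symmetric] using r by simp
    ultimately show "complex_of_real (1 / r) *
        (complex_of_real (r * (cmod (c K))\<^sup>2) * sandwich n d (tensor_op n (S K)) H x y) = ?F K"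
      using rel by (simp only: mult.assoc[symmetric]) simp
  qed
  also have "sandwich n d A (\<lambda>x' y'. \<Sum>N\<leftarrow>filter (\<lambda>K. c K = 0) Ks. gram n d N x' y') x y
      = (\<Sum>N\<leftarrow>filter (\<lambda>K. c K = 0) Ks. ?F N)"
    by (simp only: op_mult_sum_list_left op_mult_sum_list_right)
  moreover have "(\<Sum>K\<leftarrow>filter (\<lambda>K. c K \<noteq> 0) Ks. ?F K) + (\<Sum>N\<leftarrow>filter (\<lambda>K. c K = 0) Ks. ?F N)
      = (\<Sum>K\<leftarrow>Ks. ?F K)"
    using sum_list_filter_split[where P = "\<lambda>K. c K \<noteq> 0" and ks = Ks and f = ?F] by simp
  ultimately show ?thesis unfolding sandwich_kraus_sum[OF Ks x y] by simp
qed

lemma stabilizer_decomposition_if_kraus: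
  assumes Ks: "sep_kraus n d Ks" and r: "0 < r"
    and norm: "(\<Sum>K\<leftarrow>Ks. (cmod (c K))\<^sup>2) = 1 / r"
    and ann: "\<forall>K\<in>set Ks. c K = 0 \<longrightarrow> in_annihilator n d (op_apply n d (tensor_op n g) \<psi>) K"
    and stab: "\<forall>K\<in>set Ks. c K \<noteq> 0 \<longrightarrow> in_stabilizer n d \<psi> (S K)"
    and rel: "\<forall>K\<in>set Ks. c K \<noteq> 0 \<longrightarrow> (\<forall>x\<in>idxs n d. \<forall>y\<in>idxs n d.
      complex_of_real ((cmod (c K))\<^sup>2) * sandwich n d (tensor_op n (S K)) (gram n d h) x y
        = sandwich n d (tensor_op n g) (gram n d K) x y)"
  shows "stabilizer_decomposition n d \<psi> g h r"
  unfolding stabilizer_decomposition_def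
proof (intro exI conjI)
  let ?pS = "map (\<lambda>K. (r * (cmod (c K))\<^sup>2, S K)) (filter (\<lambda>K. c K \<noteq> 0) Ks)"
  show "\<forall>(p, S)\<in>set ?pS. 0 \<le> p \<and> in_stabilizer n d \<psi> S" using r stab by auto
  have "(\<Sum>K\<leftarrow>filter (\<lambda>K. c K \<noteq> 0) Ks. (cmod (c K))\<^sup>2) = (\<Sum>K\<leftarrow>Ks. (cmod (c K))\<^sup>2)"
    by (rule sum_list_map_filter) simp
  then show "(\<Sum>(p, S)\<leftarrow>?pS. p) = 1"
    using r unfolding norm by (simp add: o_def sum_list_const_mult)
  show "\<forall>N\<in>set (filter (\<lambda>K. c K = 0) Ks). in_annihilator n d (op_apply n d (tensor_op n g) \<psi>) N"
    using ann by simp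
  show "op_eq n d (\<lambda>x y. complex_of_real (1 / r) *
        (\<Sum>(p, S)\<leftarrow>?pS. complex_of_real p * sandwich n d (tensor_op n S) (gram n d h) x y)
      + sandwich n d (tensor_op n g) (\<lambda>x' y'. \<Sum>N\<leftarrow>filter (\<lambda>K. c K = 0) Ks. gram n d N x' y') x y)
      (gram n d g)"
    unfolding op_eq_def gram_def[of n d g]
    using sandwich_kraus_sum_regrouped[OF Ks r] rel by (simp add: gram_def)
qed

lemma sep_transformable_imp_stabilizer_decomposition:
  assumes n: "0 < n" and ent: "fully_entangled n d \<psi>"
    and g: "local_invertible n d g" and h: "local_invertible n d h" and \<psi>: "0 < vnorm2 n d \<psi>"
    and sep: "sep_transformable n d (op_apply n d (tensor_op n g) \<psi>) (op_apply n d (tensor_op n h) \<psi>)"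
  shows "stabilizer_decomposition n d \<psi> g h
    (vnorm2 n d (op_apply n d (tensor_op n h) \<psi>) / vnorm2 n d (op_apply n d (tensor_op n g) \<psi>))"
proof -
  define \<alpha> where "\<alpha> = op_apply n d (tensor_op n g) \<psi>"
  define \<beta> where "\<beta> = op_apply n d (tensor_op n h) \<psi>"
  have \<alpha>: "0 < vnorm2 n d \<alpha>" unfolding \<alpha>_def using g \<psi> by (rule vnorm2_op_apply_pos)
  have \<beta>: "0 < vnorm2 n d \<beta>" unfolding \<beta>_def using h \<psi> by (rule vnorm2_op_apply_pos)
  have lg: "local_ops n d g" and lh: "local_ops n d h"
    using g h by (auto simp: local_invertible_def)
  obtain hinv where hinv: "local_ops n d hinv"
      and h_hinv: "\<forall>j<n. h j * hinv j = 1\<^sub>m (d j)" and hinv_h: "\<forall>j<n. hinv j * h j = 1\<^sub>m (d j)"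
    using h by (rule local_invertibleE)
  obtain Ks where Ks: "sep_kraus n d Ks"
      and out: "op_eq n d (apply_channel n d Ks (proj n d \<alpha>)) (proj n d \<beta>)"
    using sep unfolding sep_transformable_def \<alpha>_def \<beta>_def by blast
  have K: "local_ops n d K" if "K \<in> set Ks" for K using Ks that by (auto simp: sep_kraus_def)
  obtain c where img: "\<forall>K\<in>set Ks. \<forall>x\<in>idxs n d. op_apply n d (tensor_op n K) \<alpha> x = c K * \<beta> x"
      and norm: "(\<Sum>K\<leftarrow>Ks. (cmod (c K))\<^sup>2) = vnorm2 n d \<alpha> / vnorm2 n d \<beta>"
    using kraus_images_proportional[OF out \<alpha> \<beta>] by blast
  show ?thesis
    unfolding \<alpha>_def[symmetric] \<beta>_def[symmetric]
  proof (rule stabilizer_decomposition_if_kraus[OF Ks, where c = c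
        and S = "\<lambda>K. local_smult (1 / c K) (\<lambda>j. hinv j * (K j * g j))"])
    show "0 < vnorm2 n d \<beta> / vnorm2 n d \<alpha>" using \<alpha> \<beta> by simp
    show "(\<Sum>K\<leftarrow>Ks. (cmod (c K))\<^sup>2) = 1 / (vnorm2 n d \<beta> / vnorm2 n d \<alpha>)" using norm by simp
    show "\<forall>K\<in>set Ks. c K = 0 \<longrightarrow> in_annihilator n d (op_apply n d (tensor_op n g) \<psi>) K"
      using K img unfolding \<alpha>_def by (auto simp: in_annihilator_def)
    show "\<forall>K\<in>set Ks. c K \<noteq> 0 \<longrightarrow> in_stabilizer n d \<psi> (local_smult (1 / c K) (\<lambda>j. hinv j * (K j * g j)))"
      using in_stabilizer_kraus_operator[OF n ent lg lh hinv hinv_h K] img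
      unfolding \<alpha>_def \<beta>_def by blast
    show "\<forall>K\<in>set Ks. c K \<noteq> 0 \<longrightarrow> (\<forall>x\<in>idxs n d. \<forall>y\<in>idxs n d.
      complex_of_real ((cmod (c K))\<^sup>2) *
        sandwich n d (tensor_op n (local_smult (1 / c K) (\<lambda>j. hinv j * (K j * g j)))) (gram n d h) x y
        = sandwich n d (tensor_op n g) (gram n d K) x y)"
      using sandwich_gram_kraus_operator[OF n lg lh hinv h_hinv K] by blast
  qed
qed

lemma kraus_operator_from_stabilizer:
  assumes n: "0 < n" and t: "0 \<le> t" and g: "local_ops n d g" and ginv: "local_ops n d ginv"
    and ginv_g: "\<forall>j<n. ginv j * g j = 1\<^sub>m (d j)" and h: "local_ops n d h"
    and S: "in_stabilizer n d \<psi> S"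
  defines "K \<equiv> local_smult (complex_of_real (sqrt t)) (\<lambda>j. h j * S j * ginv j)"
  shows "local_ops n d K"
    and "\<forall>x\<in>idxs n d. op_apply n d (tensor_op n K) (op_apply n d (tensor_op n g) \<psi>) x
      = complex_of_real (sqrt t) * op_apply n d (tensor_op n h) \<psi> x"
    and "\<forall>x\<in>idxs n d. \<forall>y\<in>idxs n d. gram n d K x y = complex_of_real t *
      sandwich n d (tensor_op n ginv) (sandwich n d (tensor_op n S) (gram n d h)) x y"
proof -
  let ?T = "tensor_op n" and ?I = "idxs n d"
  have lS: "local_ops n d S" and fixed: "\<forall>x\<in>?I. op_apply n d (?T S) \<psi> x = \<psi> x"
    using S by (auto simp: in_stabilizer_def local_invertible_def)
  have hS: "local_ops n d (\<lambda>j. h j * S j)" using h lS by (rule local_ops_mult)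
  have L: "local_ops n d (\<lambda>j. h j * S j * ginv j)" using hS ginv by (rule local_ops_mult)
  then show "local_ops n d K" unfolding K_def by (rule local_ops_local_smult)
  show "\<forall>x\<in>?I. op_apply n d (?T K) (op_apply n d (?T g) \<psi>) x
      = complex_of_real (sqrt t) * op_apply n d (?T h) \<psi> x"
  proof
    fix x assume x: "x \<in> ?I"
    have "op_apply n d (?T (\<lambda>j. h j * S j)) \<psi> x = op_apply n d (?T h) \<psi> x"
      using fixed by (subst op_apply_tensor_op_mult[OF h lS x]) (auto intro: op_apply_cong)
    moreover have "op_apply n d (?T (\<lambda>j. h j * S j * ginv j)) (op_apply n d (?T g) \<psi>) x
        = op_apply n d (?T (\<lambda>j. h j * S j)) \<psi> x"
      using op_apply_tensor_op_inverse[OF ginv g ginv_g]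
      by (subst op_apply_tensor_op_mult[OF hS ginv x]) (auto intro: op_apply_cong)
    ultimately show "op_apply n d (?T K) (op_apply n d (?T g) \<psi>) x
        = complex_of_real (sqrt t) * op_apply n d (?T h) \<psi> x"
      unfolding K_def op_apply_tensor_op_local_smult[OF n L x] by simp
  qed
  show "\<forall>x\<in>?I. \<forall>y\<in>?I. gram n d K x y = complex_of_real t *
      sandwich n d (?T ginv) (sandwich n d (?T S) (gram n d h)) x y"
  proof (intro ballI)
    fix x y assume x: "x \<in> ?I" and y: "y \<in> ?I"
    have "gram n d (\<lambda>j. h j * S j * ginv j) x y = sandwich n d (?T ginv) (gram n d (\<lambda>j. h j * S j)) x y"
      by (rule gram_tensor_op_mult[OF hS ginv x y])
    also have "\<dots> = sandwich n d (?T ginv) (sandwich n d (?T S) (gram n d h)) x y"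
      using gram_tensor_op_mult[OF h lS] x y by (intro sandwich_cong)
    finally show "gram n d K x y = complex_of_real t *
        sandwich n d (?T ginv) (sandwich n d (?T S) (gram n d h)) x y"
      unfolding K_def gram_local_smult[OF n L x y] using t by simp
  qed
qed

lemma sum_list_sqrt_weights:
  assumes "\<forall>(p, S)\<in>set pS. 0 \<le> p" and "0 < r"
  shows "(\<Sum>(p, S)\<leftarrow>pS. (cmod (complex_of_real (sqrt (p / r))))\<^sup>2) = (\<Sum>(p, S)\<leftarrow>pS. p) / r"
  using assms by (induction pS) (auto simp: add_divide_distrib)

lemma sep_kraus_from_stabilizer_decomposition:
  assumes g: "local_ops n d g" and ginv: "local_ops n d ginv" and g_ginv: "\<forall>j<n. g j * ginv j = 1\<^sub>m (d j)"
    and eq: "op_eq n d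
      (\<lambda>x y. complex_of_real (1 / r) *
          (\<Sum>(p, S)\<leftarrow>pS. complex_of_real p * sandwich n d (tensor_op n S) (gram n d h) x y)
        + sandwich n d (tensor_op n g) (\<lambda>x' y'. \<Sum>N\<leftarrow>Ns. gram n d N x' y') x y)
      (gram n d g)"
    and N: "\<forall>N\<in>set Ns. local_ops n d N"
    and K: "\<forall>(p, S)\<in>set pS. local_ops n d (K p S) \<and> (\<forall>x\<in>idxs n d. \<forall>y\<in>idxs n d.
      gram n d (K p S) x y = complex_of_real (p / r) *
        sandwich n d (tensor_op n ginv) (sandwich n d (tensor_op n S) (gram n d h)) x y)"
  shows "sep_kraus n d (map (\<lambda>(p, S). K p S) pS @ Ns)"
  unfolding sep_kraus_def op_eq_def
proof (intro conjI ballI)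
  show "local_ops n d K'" if "K' \<in> set (map (\<lambda>(p, S). K p S) pS @ Ns)" for K'
    using that K N by auto
  fix x y assume x: "x \<in> idxs n d" and y: "y \<in> idxs n d"
  have "(\<Sum>(p, S)\<leftarrow>pS. gram n d (K p S) x y)
      = (\<Sum>(p, S)\<leftarrow>pS. complex_of_real (p / r) *
          sandwich n d (tensor_op n ginv) (sandwich n d (tensor_op n S) (gram n d h)) x y)"
    using K x y by (intro arg_cong[where f = sum_list] map_cong refl) (auto split: prod.splits)
  also have "\<dots> = sandwich n d (tensor_op n ginv) (\<lambda>x y. complex_of_real (1 / r) *
      (\<Sum>(p, S)\<leftarrow>pS. complex_of_real p * sandwich n d (tensor_op n S) (gram n d h) x y)) x y"
    by (simp only: case_prod_unfold op_mult_scale_left op_mult_scale_right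
        op_mult_sum_list_left op_mult_sum_list_right)
      (simp add: sum_list_const_mult[symmetric] o_def)
  finally have "(\<Sum>(p, S)\<leftarrow>pS. gram n d (K p S) x y) + (\<Sum>N\<leftarrow>Ns. gram n d N x y) = op_id x y"
    using sandwich_inverse_decomposition[OF g ginv g_ginv eq x y] by simp
  then show "(\<Sum>K\<leftarrow>map (\<lambda>(p, S). K p S) pS @ Ns.
      op_mult n d (op_adj (tensor_op n K)) (tensor_op n K) x y) = op_id x y"
    by (simp add: gram_def case_prod_unfold o_def)
qed

lemma stabilizer_decomposition_imp_sep_transformable:
  assumes n: "0 < n" and g: "local_invertible n d g" and h: "local_invertible n d h"
    and \<psi>: "0 < vnorm2 n d \<psi>"
    and dec: "stabilizer_decomposition n d \<psi> g h
      (vnorm2 n d (op_apply n d (tensor_op n h) \<psi>) / vnorm2 n d (op_apply n d (tensor_op n g) \<psi>))"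
  shows "sep_transformable n d (op_apply n d (tensor_op n g) \<psi>) (op_apply n d (tensor_op n h) \<psi>)"
proof -
  define \<alpha> where "\<alpha> = op_apply n d (tensor_op n g) \<psi>"
  define \<beta> where "\<beta> = op_apply n d (tensor_op n h) \<psi>"
  define r where "r = vnorm2 n d \<beta> / vnorm2 n d \<alpha>"
  have \<alpha>: "0 < vnorm2 n d \<alpha>" unfolding \<alpha>_def using g \<psi> by (rule vnorm2_op_apply_pos)
  have \<beta>: "0 < vnorm2 n d \<beta>" unfolding \<beta>_def using h \<psi> by (rule vnorm2_op_apply_pos)
  have r: "0 < r" unfolding r_def using \<alpha> \<beta> by simp
  have lg: "local_ops n d g" and lh: "local_ops n d h"
    using g h by (auto simp: local_invertible_def)
  obtain ginv where ginv: "local_ops n d ginv"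
      and g_ginv: "\<forall>j<n. g j * ginv j = 1\<^sub>m (d j)" and ginv_g: "\<forall>j<n. ginv j * g j = 1\<^sub>m (d j)"
    using g by (rule local_invertibleE)
  obtain pS Ns where stab: "\<forall>(p, S)\<in>set pS. 0 \<le> p \<and> in_stabilizer n d \<psi> S"
    and weights: "(\<Sum>(p, S)\<leftarrow>pS. p) = 1" and ann: "\<forall>N\<in>set Ns. in_annihilator n d \<alpha> N"
    and eq: "op_eq n d
      (\<lambda>x y. complex_of_real (1 / r) *
          (\<Sum>(p, S)\<leftarrow>pS. complex_of_real p * sandwich n d (tensor_op n S) (gram n d h) x y)
        + sandwich n d (tensor_op n g) (\<lambda>x' y'. \<Sum>N\<leftarrow>Ns. gram n d N x' y') x y)
      (gram n d g)"
    using dec unfolding stabilizer_decomposition_def \<alpha>_def[symmetric] \<beta>_def[symmetric] r_def[symmetric]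
    by blast
  define K where "K p S = local_smult (complex_of_real (sqrt (p / r))) (\<lambda>j. h j * S j * ginv j)" for p S
  have K: "local_ops n d (K p S)"
      "\<forall>x\<in>idxs n d. op_apply n d (tensor_op n (K p S)) \<alpha> x = complex_of_real (sqrt (p / r)) * \<beta> x"
      "\<forall>x\<in>idxs n d. \<forall>y\<in>idxs n d. gram n d (K p S) x y = complex_of_real (p / r) *
        sandwich n d (tensor_op n ginv) (sandwich n d (tensor_op n S) (gram n d h)) x y"
    if "(p, S) \<in> set pS" for p S
    using kraus_operator_from_stabilizer[OF n _ lg ginv ginv_g lh, of "p / r" \<psi> S] stab that r
    unfolding K_def \<alpha>_def \<beta>_def by auto
  define cKs where "cKs = map (\<lambda>(p, S). (complex_of_real (sqrt (p / r)), K p S)) pS @ map (Pair 0) Ns"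
  have "map snd cKs = map (\<lambda>(p, S). K p S) pS @ Ns"
    unfolding cKs_def by (simp add: case_prod_unfold o_def)
  moreover have "sep_kraus n d (map (\<lambda>(p, S). K p S) pS @ Ns)"
    using ann K(1,3) by (intro sep_kraus_from_stabilizer_decomposition[OF lg ginv g_ginv eq])
      (auto simp: in_annihilator_def)
  ultimately have Ks: "sep_kraus n d (map snd cKs)" by simp
  have img: "\<forall>(c, K)\<in>set cKs. \<forall>x\<in>idxs n d. op_apply n d (tensor_op n K) \<alpha> x = c * \<beta> x"
    unfolding cKs_def using K(2) ann by (auto simp: in_annihilator_def)
  have "(\<Sum>(c, K)\<leftarrow>cKs. (cmod c)\<^sup>2) = (\<Sum>(p, S)\<leftarrow>pS. (cmod (complex_of_real (sqrt (p / r))))\<^sup>2)"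
    unfolding cKs_def by (induction Ns) (simp_all add: case_prod_unfold o_def)
  also have "\<dots> = vnorm2 n d \<alpha> / vnorm2 n d \<beta>"
    using sum_list_sqrt_weights[of pS r] stab r \<alpha> \<beta> unfolding weights r_def by auto
  finally show ?thesis
    using sep_transformable_if_kraus_images[OF Ks img _ \<alpha> \<beta>] unfolding \<alpha>_def \<beta>_def by blast
qed

(* For psi = 0 the ratio is 0 / 0 = 0, so the annihilator part alone has to produce G. *)
lemma stabilizer_decomposition_0:
  "stabilizer_decomposition 0 d \<psi> g h
    (vnorm2 0 d (op_apply 0 d (tensor_op 0 h) \<psi>) / vnorm2 0 d (op_apply 0 d (tensor_op 0 g) \<psi>))"
proof (cases "\<psi> (\<lambda>_. undefined) = 0")
  case True
  then show ?thesis
    unfolding stabilizer_decomposition_def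
    by (intro exI[of _ "[(1, \<lambda>j. 1\<^sub>m (d j))]"] exI[of _ "[\<lambda>j. 1\<^sub>m (d j)]"])
      (simp add: in_stabilizer_def in_annihilator_def local_invertible_def local_ops_def op_eq_def
        idxs_0 op_mult_def op_adj_def op_apply_def tensor_op_def gram_def vnorm2_def)
next
  case False
  then show ?thesis
    unfolding stabilizer_decomposition_def
    by (intro exI[of _ "[(1, \<lambda>j. 1\<^sub>m (d j))]"] exI[of _ "[]"])
      (simp add: in_stabilizer_def in_annihilator_def local_invertible_def local_ops_def op_eq_def
        idxs_0 op_mult_def op_adj_def op_apply_def tensor_op_def gram_def vnorm2_def)
qed

theorem theorem2:
  fixes n :: nat and d :: "nat \<Rightarrow> nat" and \<psi> :: gvec and g h :: local_op
  assumes dpos: "\<forall>j<n. 0 < d j"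
    and ent: "fully_entangled n d \<psi>"
    and g: "local_invertible n d g"
    and h: "local_invertible n d h"
  shows "sep_transformable n d (op_apply n d (tensor_op n g) \<psi>) (op_apply n d (tensor_op n h) \<psi>)
    \<longleftrightarrow>
    (let G = gram n d g; H = gram n d h;
         r = vnorm2 n d (op_apply n d (tensor_op n h) \<psi>) / vnorm2 n d (op_apply n d (tensor_op n g) \<psi>)
     in \<exists>(pS :: (real \<times> local_op) list) (Ns :: local_op list).
          (\<forall>(p, S)\<in>set pS. 0 \<le> p \<and> in_stabilizer n d \<psi> S) \<and>
          (\<Sum>(p, S)\<leftarrow>pS. p) = 1 \<and>
          (\<forall>N\<in>set Ns. in_annihilator n d (op_apply n d (tensor_op n g) \<psi>) N) \<and>
          op_eq n d
            (\<lambda>x y. complex_of_real (1 / r) *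
                      (\<Sum>(p, S)\<leftarrow>pS. complex_of_real p *
                         op_mult n d (op_mult n d (op_adj (tensor_op n S)) H) (tensor_op n S) x y)
                   + op_mult n d (op_mult n d (op_adj (tensor_op n g))
                        (\<lambda>x' y'. \<Sum>N\<leftarrow>Ns. gram n d N x' y')) (tensor_op n g) x y)
            G)"
proof -
  have "sep_transformable n d (op_apply n d (tensor_op n g) \<psi>) (op_apply n d (tensor_op n h) \<psi>)
      \<longleftrightarrow> stabilizer_decomposition n d \<psi> g h
        (vnorm2 n d (op_apply n d (tensor_op n h) \<psi>) / vnorm2 n d (op_apply n d (tensor_op n g) \<psi>))"
  proof (cases "n = 0")
    case True
    then show ?thesis
      using sep_transformable_refl stabilizer_decomposition_0 by (simp add: tensor_op_def)
  next
    case False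
    then have "0 < vnorm2 n d \<psi>" using fully_entangled_vnorm2_pos[OF ent] dpos by simp
    then show ?thesis
      using sep_transformable_imp_stabilizer_decomposition stabilizer_decomposition_imp_sep_transformable
        False ent g h by blast
  qed
  then show ?thesis unfolding stabilizer_decomposition_def Let_def .
qed

end
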